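(* Let $M$ be a power-associative magma (finite or infinite). Then the undirected power graph $P(M)$ is perfect: every finite induced subgraph of $P(M)$ has clique number equal to its chromatic number. In particular, the power graph of any group contains no induced cycle $C_n$ with $n$ odd, $n\ge 5$, and no induced complement of such a cycle.
   Context: A power-associative magma is a set with a binary operation such that the associative law holds for products of powers of a single element, so that positive powers $x^n$ are unambiguously defined. The (undirected) power graph $P(M)$ has vertex set $M$, with distinct $u,v$ adjacent if and only if $v=u^i$ or $u=v^j$ for some positive integers $i,j$. An infinite graph is called perfect if every finite induced subgraph has clique number equal to chromatic number. *)

theory Defs
  imports Main
begin

text \<open>Magma: a type 'a with a binary operation mult. Positive powers:
  mpow mult x n = x^(n+1), i.e. x^1 = x and x^(k+1) = x^k * x.\<close>
fun mpow :: "('a \<Rightarrow> 'a \<Rightarrow> 'a) \<Rightarrow> 'a \<Rightarrow> nat \<Rightarrow> 'a" where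
  "mpow mult x 0 = x"
| "mpow mult x (Suc n) = mult (mpow mult x n) x"

text \<open>Positive power x^n for n \<ge> 1 (value at n = 0 irrelevant).\<close>
definition ppow :: "('a \<Rightarrow> 'a \<Rightarrow> 'a) \<Rightarrow> 'a \<Rightarrow> nat \<Rightarrow> 'a" where
  "ppow mult x n = mpow mult x (n - 1)"

definition power_associative :: "('a \<Rightarrow> 'a \<Rightarrow> 'a) \<Rightarrow> bool" where
  "power_associative mult \<longleftrightarrow>
     (\<forall>x m n. m \<ge> 1 \<longrightarrow> n \<ge> 1 \<longrightarrow> mult (ppow mult x m) (ppow mult x n) = ppow mult x (m + n))"

definition power_adj :: "('a \<Rightarrow> 'a \<Rightarrow> 'a) \<Rightarrow> 'a \<Rightarrow> 'a \<Rightarrow> bool" where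
  "power_adj mult u v \<longleftrightarrow> u \<noteq> v \<and>
     ((\<exists>i\<ge>1. v = ppow mult u i) \<or> (\<exists>j\<ge>1. u = ppow mult v j))"

definition is_clique :: "('a \<Rightarrow> 'a \<Rightarrow> bool) \<Rightarrow> 'a set \<Rightarrow> bool" where
  "is_clique adj K \<longleftrightarrow> (\<forall>u\<in>K. \<forall>v\<in>K. u \<noteq> v \<longrightarrow> adj u v)"

definition clique_number :: "('a \<Rightarrow> 'a \<Rightarrow> bool) \<Rightarrow> 'a set \<Rightarrow> nat" where
  "clique_number adj S = Max {card K | K. K \<subseteq> S \<and> is_clique adj K}"

definition proper_colouring :: "('a \<Rightarrow> 'a \<Rightarrow> bool) \<Rightarrow> 'a set \<Rightarrow> nat \<Rightarrow> ('a \<Rightarrow> nat) \<Rightarrow> bool" where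
  "proper_colouring adj S k c \<longleftrightarrow>
     (\<forall>v\<in>S. c v < k) \<and> (\<forall>u\<in>S. \<forall>v\<in>S. adj u v \<longrightarrow> c u \<noteq> c v)"

definition chromatic_number :: "('a \<Rightarrow> 'a \<Rightarrow> bool) \<Rightarrow> 'a set \<Rightarrow> nat" where
  "chromatic_number adj S = (LEAST k. \<exists>c. proper_colouring adj S k c)"

definition perfect_graph :: "('a \<Rightarrow> 'a \<Rightarrow> bool) \<Rightarrow> bool" where
  "perfect_graph adj \<longleftrightarrow>
     (\<forall>S. finite S \<longrightarrow> clique_number adj S = chromatic_number adj S)"

end

theory Submission
  imports Defs
begin

text \<open>Being a power of is a preorder on a power-associative magma, because
  (x^i)^j = x^(ij), and the power graph is the comparability graph of this preorder.
  Breaking ties inside each equivalence class by an arbitrary enumeration of a finite vertex set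
  gives a strict partial order with the same comparability graph, and a comparability graph of a
  strict partial order is coloured optimally by colouring each vertex with the clique number of the
  set of vertices below it (Mirsky's argument): comparable vertices get different colours, and
  every colour is smaller than the clique number.\<close>

lemma finite_clique_sizes:
  assumes "finite S"
  shows "finite {card K | K. K \<subseteq> S \<and> is_clique adj K}"
  by (rule finite_subset[of _ "{..card S}"]) (use assms in \<open>auto intro: card_mono\<close>)

lemma card_le_clique_number:
  assumes "finite S" "K \<subseteq> S" "is_clique adj K"
  shows "card K \<le> clique_number adj S"
  unfolding clique_number_def using assms by (intro Max_ge[OF finite_clique_sizes]) blast+

lemma clique_number_attained:
  assumes "finite S"
  obtains K where "K \<subseteq> S" "is_clique adj K" "card K = clique_number adj S"
proof -
  let ?sizes = "{card K | K. K \<subseteq> S \<and> is_clique adj K}"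
  have "card {} \<in> ?sizes" by (auto simp: is_clique_def intro!: exI[of _ "{}"])
  then have "Max ?sizes \<in> ?sizes" using finite_clique_sizes[OF assms] by (intro Max_in) auto
  then show ?thesis using that unfolding clique_number_def by auto
qed

lemma clique_number_le_colours:
  assumes "finite S" "proper_colouring adj S k c"
  shows "clique_number adj S \<le> k"
proof -
  obtain K where K: "K \<subseteq> S" "is_clique adj K" "card K = clique_number adj S"
    using clique_number_attained[OF assms(1)] .
  have inj: "inj_on c K" and range: "c ` K \<subseteq> {..<k}"
    using K assms(2) unfolding inj_on_def proper_colouring_def is_clique_def by blast+
  have "clique_number adj S = card (c ` K)" using K(3) card_image[OF inj] by simp
  also have "\<dots> \<le> card {..<k}" using range by (intro card_mono) simp_all
  finally show ?thesis by simp
qed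

lemma chromatic_number_eq_clique_number:
  assumes "finite S" "proper_colouring adj S (clique_number adj S) c"
  shows "chromatic_number adj S = clique_number adj S"
  unfolding chromatic_number_def
proof (rule Least_equality)
  show "\<exists>c. proper_colouring adj S (clique_number adj S) c" using assms(2) by blast
  show "clique_number adj S \<le> k" if "\<exists>c. proper_colouring adj S k c" for k
    using that clique_number_le_colours[OF assms(1)] by blast
qed

lemma comparability_graph_colouring:
  assumes "finite S"
    and lt_trans: "\<And>u v w. lt u v \<Longrightarrow> lt v w \<Longrightarrow> lt u w"
    and lt_irrefl: "\<And>u. \<not> lt u u"
    and adj_iff: "\<And>u v. u \<in> S \<Longrightarrow> v \<in> S \<Longrightarrow> adj u v \<longleftrightarrow> lt u v \<or> lt v u"
  shows "proper_colouring adj S (clique_number adj S) (\<lambda>v. clique_number adj {x \<in> S. lt x v})"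
    (is "proper_colouring adj S _ ?c")
proof -
  have cone: "is_clique adj (insert v K) \<and> card (insert v K) = Suc (card K)"
    if "K \<subseteq> {x \<in> S. lt x v}" "is_clique adj K" "v \<in> S" for K v
  proof
    have "adj x v \<and> adj v x" if "x \<in> K" for x
    proof -
      have "x \<in> S" "lt x v" using \<open>K \<subseteq> {x \<in> S. lt x v}\<close> that by auto
      then show ?thesis using adj_iff \<open>v \<in> S\<close> by simp
    qed
    then show "is_clique adj (insert v K)"
      using \<open>is_clique adj K\<close> unfolding is_clique_def by blast
    have "finite K" using \<open>finite S\<close> \<open>K \<subseteq> {x \<in> S. lt x v}\<close> by (simp add: finite_subset)
    moreover have "v \<notin> K" using \<open>K \<subseteq> {x \<in> S. lt x v}\<close> lt_irrefl by blast
    ultimately show "card (insert v K) = Suc (card K)" by simp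
  qed
  have below_max: "?c v < clique_number adj S" if "v \<in> S" for v
  proof -
    have "finite {x \<in> S. lt x v}" using \<open>finite S\<close> by simp
    then obtain K where K: "K \<subseteq> {x \<in> S. lt x v}" "is_clique adj K" "card K = ?c v"
      by (rule clique_number_attained)
    have "insert v K \<subseteq> S" using K(1) that by blast
    then have "card (insert v K) \<le> clique_number adj S"
      using cone[OF K(1,2) that] \<open>finite S\<close> card_le_clique_number by blast
    then show ?thesis using cone[OF K(1,2) that] K(3) by simp
  qed
  have strict_mono: "?c u < ?c v" if "lt u v" "u \<in> S" for u v
  proof -
    have "finite {x \<in> S. lt x u}" using \<open>finite S\<close> by simp
    then obtain K where K: "K \<subseteq> {x \<in> S. lt x u}" "is_clique adj K" "card K = ?c u"
      by (rule clique_number_attained)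
    have "insert u K \<subseteq> {x \<in> S. lt x v}"
      using K(1) that lt_trans by blast
    moreover have "finite {x \<in> S. lt x v}" using \<open>finite S\<close> by simp
    ultimately have "card (insert u K) \<le> ?c v"
      using cone[OF K(1,2) that(2)] card_le_clique_number by blast
    then show ?thesis using cone[OF K(1,2) that(2)] K(3) by simp
  qed
  show ?thesis
    unfolding proper_colouring_def
  proof (intro conjI ballI impI)
    show "?c v < clique_number adj S" if "v \<in> S" for v
      using below_max[OF that] .
    show "?c u \<noteq> ?c v" if "u \<in> S" "v \<in> S" "adj u v" for u v
    proof -
      have "lt u v \<or> lt v u" using adj_iff[OF that(1,2)] that(3) by simp
      then have "?c u < ?c v \<or> ?c v < ?c u" using strict_mono that(1,2) by blast
      then show ?thesis by auto
    qed
  qed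
qed

lemma strict_refinement_of_preorder:
  fixes r :: "'a \<Rightarrow> nat"
  assumes "transp le"
  defines "lt \<equiv> \<lambda>u v. le u v \<and> (\<not> le v u \<or> r u < r v)"
  shows "lt u v \<Longrightarrow> lt v w \<Longrightarrow> lt u w"
    and "\<not> lt u u"
    and "inj_on r S \<Longrightarrow> u \<in> S \<Longrightarrow> v \<in> S \<Longrightarrow> u \<noteq> v \<Longrightarrow> le u v \<or> le v u \<longleftrightarrow> lt u v \<or> lt v u"
proof -
  assume uv: "lt u v" and vw: "lt v w"
  then have "le u v" "le v w" unfolding lt_def by auto
  then have "le u w" using \<open>transp le\<close> by (meson transpD)
  show "lt u w"
  proof (cases "le w u")
    case True
    then have "le v u" "le w v" using \<open>le u v\<close> \<open>le v w\<close> \<open>transp le\<close> by (meson transpD)+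
    then show ?thesis using uv vw \<open>le u w\<close> unfolding lt_def by auto
  qed (use \<open>le u w\<close> lt_def in auto)
next
  show "\<not> lt u u" unfolding lt_def by simp
next
  assume "inj_on r S" "u \<in> S" "v \<in> S" "u \<noteq> v"
  then have "r u \<noteq> r v" by (meson inj_on_def)
  then show "le u v \<or> le v u \<longleftrightarrow> lt u v \<or> lt v u" unfolding lt_def by auto
qed

lemma perfect_graph_comparability_of_preorder:
  assumes "transp le" and adj_iff: "\<And>u v. adj u v \<longleftrightarrow> u \<noteq> v \<and> (le u v \<or> le v u)"
  shows "perfect_graph adj"
  unfolding perfect_graph_def
proof (intro allI impI)
  fix S :: "'a set" assume "finite S"
  then obtain r :: "'a \<Rightarrow> nat" where r: "inj_on r S"
    using finite_imp_inj_to_nat_seg by blast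
  define lt where "lt u v \<longleftrightarrow> le u v \<and> (\<not> le v u \<or> r u < r v)" for u v
  note refinement = strict_refinement_of_preorder[OF \<open>transp le\<close>, where r = r, folded lt_def]
  have adj_lt: "adj u v \<longleftrightarrow> lt u v \<or> lt v u" if "u \<in> S" "v \<in> S" for u v
    using refinement(2)[of u] refinement(3)[OF r that] unfolding adj_iff by (cases "u = v") auto
  have "proper_colouring adj S (clique_number adj S) (\<lambda>v. clique_number adj {x \<in> S. lt x v})"
    using refinement(1,2) adj_lt by (rule comparability_graph_colouring[OF \<open>finite S\<close>])
  then have "chromatic_number adj S = clique_number adj S"
    by (rule chromatic_number_eq_clique_number[OF \<open>finite S\<close>])
  then show "clique_number adj S = chromatic_number adj S" ..
qed

lemma ppow_1 [simp]: "ppow mult x (Suc 0) = x"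
  by (simp add: ppow_def)

lemma ppow_Suc: "n \<ge> 1 \<Longrightarrow> ppow mult x (Suc n) = mult (ppow mult x n) x"
  by (cases n) (auto simp: ppow_def)

lemma ppow_ppow:
  assumes "power_associative mult" "i \<ge> 1" "j \<ge> 1"
  shows "ppow mult (ppow mult x i) j = ppow mult x (i * j)"
  using \<open>j \<ge> 1\<close>
proof (induction j rule: nat_induct_at_least)
  case base
  then show ?case by simp
next
  case (Suc n)
  have "ppow mult (ppow mult x i) (Suc n) = mult (ppow mult x (i * n)) (ppow mult x i)"
    using Suc by (simp add: ppow_Suc)
  also have "\<dots> = ppow mult x (i * n + i)"
    using assms(1,2) Suc(1) unfolding power_associative_def by simp
  finally show ?case by (simp add: add.commute)
qed

definition power_of :: "('a \<Rightarrow> 'a \<Rightarrow> 'a) \<Rightarrow> 'a \<Rightarrow> 'a \<Rightarrow> bool" where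
  "power_of mult v u \<longleftrightarrow> (\<exists>i\<ge>1. v = ppow mult u i)"

lemma transp_power_of:
  assumes "power_associative mult"
  shows "transp (power_of mult)"
proof (rule transpI)
  fix u v w assume "power_of mult u v" "power_of mult v w"
  then obtain i j where ij: "i \<ge> 1" "j \<ge> 1" and "v = ppow mult w j" "u = ppow mult v i"
    unfolding power_of_def by blast
  then have "u = ppow mult w (j * i)" using ppow_ppow[OF assms ij(2,1)] by simp
  moreover have "j * i \<ge> 1" using ij by simp
  ultimately show "power_of mult u w" unfolding power_of_def by blast
qed

lemma power_adj_iff_power_of:
  "power_adj mult u v \<longleftrightarrow> u \<noteq> v \<and> (power_of mult u v \<or> power_of mult v u)"
  unfolding power_adj_def power_of_def by blast

theorem mainTheorem3:
  fixes mult :: "'a \<Rightarrow> 'a \<Rightarrow> 'a"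
  assumes "power_associative mult"
  shows "perfect_graph (power_adj mult)"
  using transp_power_of[OF assms] power_adj_iff_power_of
  by (rule perfect_graph_comparability_of_preorder)

end
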